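(* Fix integers $m\ge3$ and $n\ge2$. The cycle $C_m$ and the path $P_n$ are strongly disjoint if and only if $m$ is odd and $\gcd(m,n-1)=1$.
   Context: A weight function on finite $U$ is $\alpha:U\times U\to\mathbb{R}$, $\alpha\ge0$, symmetric, summing to $1$; degree $p(u)=\sum_{u'}\alpha(u,u')$; a graph is $(U,\alpha)$. $C_k$ ($k\ge3$) is the cycle on vertices $u_1,\dots,u_k$ with $\alpha(u_i,u_{i\pm1})=1/(2k)$ (indices mod $k$) and all other weights $0$. $P_k$ ($k\ge2$) is the path on $u_1,\dots,u_k$ with $\alpha(u_i,u_{i+1})=\alpha(u_{i+1},u_i)=1/(2(k-1))$ and all other weights $0$. For graphs $(U,\alpha)$, $(V,\beta)$ with degrees $p,q$, a weight joining is a weight function $\gamma$ on $U\times V$ with degree $r(u,v)=\sum_{(u',v')}\gamma((u,v),(u',v'))$ such that $\sum_v r(u,v)=p(u)$, $\sum_u r(u,v)=q(v)$, $p(u)\sum_{\tilde v}\gamma((u,v),(u',\tilde v))=\alpha(u,u')r(u,v)$ and $q(v)\sum_{\tilde u}\gamma((u,v),(\tilde u,v'))=\beta(v,v')r(u,v)$ for all $u,u',v,v'$. The graphs are strongly disjoint if the only weight joining is $\alpha\otimes\beta$, $(\alpha\otimes\beta)((u,v),(u',v'))=\alpha(u,u')\beta(v,v')$. *)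

theory Defs
  imports Complex_Main
begin

definition weight_fun :: "'a set \<Rightarrow> ('a \<Rightarrow> 'a \<Rightarrow> real) \<Rightarrow> bool" where
  "weight_fun U \<alpha> \<longleftrightarrow> finite U \<and>
     (\<forall>u\<in>U. \<forall>u'\<in>U. \<alpha> u u' \<ge> 0 \<and> \<alpha> u u' = \<alpha> u' u) \<and>
     (\<Sum>u\<in>U. \<Sum>u'\<in>U. \<alpha> u u') = 1"

definition wdeg :: "'a set \<Rightarrow> ('a \<Rightarrow> 'a \<Rightarrow> real) \<Rightarrow> 'a \<Rightarrow> real" where
  "wdeg U \<alpha> u = (\<Sum>u'\<in>U. \<alpha> u u')"

definition weight_joining ::
  "'a set \<Rightarrow> ('a \<Rightarrow> 'a \<Rightarrow> real) \<Rightarrow> 'b set \<Rightarrow> ('b \<Rightarrow> 'b \<Rightarrow> real)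
    \<Rightarrow> ('a \<times> 'b \<Rightarrow> 'a \<times> 'b \<Rightarrow> real) \<Rightarrow> bool" where
  "weight_joining U \<alpha> V \<beta> \<gamma> \<longleftrightarrow>
     weight_fun (U \<times> V) \<gamma> \<and>
     (\<forall>u\<in>U. (\<Sum>v\<in>V. wdeg (U \<times> V) \<gamma> (u, v)) = wdeg U \<alpha> u) \<and>
     (\<forall>v\<in>V. (\<Sum>u\<in>U. wdeg (U \<times> V) \<gamma> (u, v)) = wdeg V \<beta> v) \<and>
     (\<forall>u\<in>U. \<forall>u'\<in>U. \<forall>v\<in>V.
        wdeg U \<alpha> u * (\<Sum>v'\<in>V. \<gamma> (u, v) (u', v')) = \<alpha> u u' * wdeg (U \<times> V) \<gamma> (u, v)) \<and>
     (\<forall>v\<in>V. \<forall>v'\<in>V. \<forall>u\<in>U.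
        wdeg V \<beta> v * (\<Sum>u'\<in>U. \<gamma> (u, v) (u', v')) = \<beta> v v' * wdeg (U \<times> V) \<gamma> (u, v))"

definition strongly_disjoint ::
  "'a set \<Rightarrow> ('a \<Rightarrow> 'a \<Rightarrow> real) \<Rightarrow> 'b set \<Rightarrow> ('b \<Rightarrow> 'b \<Rightarrow> real) \<Rightarrow> bool" where
  "strongly_disjoint U \<alpha> V \<beta> \<longleftrightarrow>
     (\<forall>\<gamma>. weight_joining U \<alpha> V \<beta> \<gamma> \<longrightarrow>
        (\<forall>x\<in>U \<times> V. \<forall>y\<in>U \<times> V. \<gamma> x y = \<alpha> (fst x) (fst y) * \<beta> (snd x) (snd y)))"

text \<open>Cycle C_k on vertices 0..k-1 (u_i \<mapsto> i-1), path P_k on vertices 0..k-1.\<close>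
definition cycle_w :: "nat \<Rightarrow> nat \<Rightarrow> nat \<Rightarrow> real" where
  "cycle_w k i j = (if j = (i + 1) mod k \<or> i = (j + 1) mod k then 1 / (2 * real k) else 0)"

definition path_w :: "nat \<Rightarrow> nat \<Rightarrow> nat \<Rightarrow> real" where
  "path_w k i j = (if j = i + 1 \<or> i = j + 1 then 1 / (2 * (real k - 1)) else 0)"

end

(* A weight joining of C_m and P_n lives on the diagonal edges ((u, v), (u +- 1, v +- 1)) of the
   product. Comparing its cycle and path marginals at each vertex shows that the edge weights are
   constant along rising diagonals (u - v fixed) and falling ones (u + v fixed), and that at the two
   ends of the path the rising diagonals are reflected into falling ones and back. Hence the weight
   f(x) of the edge from (x, 0) to (x + 1, 1) has the periods m and 2(n - 1); if these are coprime,
   f is constant and normalisation gives the product.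
   Conversely, if d >= 2 divides m and 2(n - 1), multiply the product on each diagonal edge by
   1 + (g(x + 1) - g(x)) / 2, where x is the index of the diagonal and g the indicator of d Z. The
   factor averages to 1 over every window of length m or 2(n - 1), so all marginal constraints
   survive, and the result is a joining different from the product.
   Finally, m and 2(n - 1) are coprime iff m is odd and gcd(m, n - 1) = 1. *)

theory Submission
  imports Defs
begin

lemma weight_joining_finite:
  "weight_joining U \<alpha> V \<beta> \<gamma> \<Longrightarrow> finite (U \<times> V)"
  unfolding weight_joining_def weight_fun_def by blast

lemma weight_joining_nonneg:
  assumes "weight_joining U \<alpha> V \<beta> \<gamma>" "x \<in> U \<times> V" "y \<in> U \<times> V"
  shows "\<gamma> x y \<ge> 0"
  using assms unfolding weight_joining_def weight_fun_def by blast

lemma weight_joining_sym: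
  assumes "weight_joining U \<alpha> V \<beta> \<gamma>" "x \<in> U \<times> V" "y \<in> U \<times> V"
  shows "\<gamma> x y = \<gamma> y x"
  using assms unfolding weight_joining_def weight_fun_def by blast

lemma weight_joining_total:
  "weight_joining U \<alpha> V \<beta> \<gamma> \<Longrightarrow> (\<Sum>x\<in>U \<times> V. \<Sum>y\<in>U \<times> V. \<gamma> x y) = 1"
  unfolding weight_joining_def weight_fun_def by blast

lemma weight_joining_marginal_fst:
  "weight_joining U \<alpha> V \<beta> \<gamma> \<Longrightarrow> u \<in> U \<Longrightarrow>
     (\<Sum>v\<in>V. wdeg (U \<times> V) \<gamma> (u, v)) = wdeg U \<alpha> u"
  unfolding weight_joining_def by blast

lemma weight_joining_marginal_snd:
  "weight_joining U \<alpha> V \<beta> \<gamma> \<Longrightarrow> v \<in> V \<Longrightarrow>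
     (\<Sum>u\<in>U. wdeg (U \<times> V) \<gamma> (u, v)) = wdeg V \<beta> v"
  unfolding weight_joining_def by blast

lemma weight_joining_transition_fst:
  "weight_joining U \<alpha> V \<beta> \<gamma> \<Longrightarrow> u \<in> U \<Longrightarrow> u' \<in> U \<Longrightarrow> v \<in> V \<Longrightarrow>
     wdeg U \<alpha> u * (\<Sum>v'\<in>V. \<gamma> (u, v) (u', v')) = \<alpha> u u' * wdeg (U \<times> V) \<gamma> (u, v)"
  unfolding weight_joining_def by blast

lemma weight_joining_transition_snd:
  "weight_joining U \<alpha> V \<beta> \<gamma> \<Longrightarrow> v \<in> V \<Longrightarrow> v' \<in> V \<Longrightarrow> u \<in> U \<Longrightarrow>
     wdeg V \<beta> v * (\<Sum>u'\<in>U. \<gamma> (u, v) (u', v')) = \<beta> v v' * wdeg (U \<times> V) \<gamma> (u, v)"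
  unfolding weight_joining_def by blast

lemma weight_joining_support_fst:
  assumes J: "weight_joining U \<alpha> V \<beta> \<gamma>"
    and uv: "u \<in> U" "u' \<in> U" "v \<in> V" "v' \<in> V"
    and "wdeg U \<alpha> u > 0" and "\<alpha> u u' = 0"
  shows "\<gamma> (u, v) (u', v') = 0"
proof -
  have "wdeg U \<alpha> u * (\<Sum>v''\<in>V. \<gamma> (u, v) (u', v'')) = 0"
    using weight_joining_transition_fst[OF J uv(1-3)] \<open>\<alpha> u u' = 0\<close> by simp
  then have "(\<Sum>v''\<in>V. \<gamma> (u, v) (u', v'')) = 0"
    using \<open>wdeg U \<alpha> u > 0\<close> by simp
  moreover have "finite V"
    using finite_cartesian_productD2[OF weight_joining_finite[OF J]] uv by blast
  ultimately show ?thesis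
    using uv weight_joining_nonneg[OF J] by (subst (asm) sum_nonneg_eq_0_iff) auto
qed

lemma weight_joining_support_snd:
  assumes J: "weight_joining U \<alpha> V \<beta> \<gamma>"
    and uv: "u \<in> U" "u' \<in> U" "v \<in> V" "v' \<in> V"
    and "wdeg V \<beta> v > 0" and "\<beta> v v' = 0"
  shows "\<gamma> (u, v) (u', v') = 0"
proof -
  have "wdeg V \<beta> v * (\<Sum>u''\<in>U. \<gamma> (u, v) (u'', v')) = 0"
    using weight_joining_transition_snd[OF J uv(3,4,1)] \<open>\<beta> v v' = 0\<close> by simp
  then have "(\<Sum>u''\<in>U. \<gamma> (u, v) (u'', v')) = 0"
    using \<open>wdeg V \<beta> v > 0\<close> by simp
  moreover have "finite U"
    using finite_cartesian_productD1[OF weight_joining_finite[OF J]] uv by blast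
  ultimately show ?thesis
    using uv weight_joining_nonneg[OF J] by (subst (asm) sum_nonneg_eq_0_iff) auto
qed

lemma weight_joining_sum_wdeg_fst:
  assumes J: "weight_joining U \<alpha> V \<beta> \<gamma>"
  shows "(\<Sum>u\<in>U. wdeg U \<alpha> u) = 1"
proof -
  have "(\<Sum>u\<in>U. wdeg U \<alpha> u) = (\<Sum>u\<in>U. \<Sum>v\<in>V. wdeg (U \<times> V) \<gamma> (u, v))"
    using weight_joining_marginal_fst[OF J] by simp
  also have "\<dots> = (\<Sum>x\<in>U \<times> V. \<Sum>y\<in>U \<times> V. \<gamma> x y)"
    by (simp add: wdeg_def sum.cartesian_product')
  finally show ?thesis
    using weight_joining_total[OF J] by simp
qed

lemma weight_joining_sum_wdeg_snd:
  assumes J: "weight_joining U \<alpha> V \<beta> \<gamma>"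
  shows "(\<Sum>v\<in>V. wdeg V \<beta> v) = 1"
proof -
  have "(\<Sum>v\<in>V. wdeg V \<beta> v) = (\<Sum>v\<in>V. \<Sum>u\<in>U. wdeg (U \<times> V) \<gamma> (u, v))"
    using weight_joining_marginal_snd[OF J] by simp
  also have "\<dots> = (\<Sum>x\<in>U \<times> V. \<Sum>y\<in>U \<times> V. \<gamma> x y)"
    by (subst sum.swap) (simp add: wdeg_def sum.cartesian_product')
  finally show ?thesis
    using weight_joining_total[OF J] by simp
qed

lemma sum_tensor:
  "(\<Sum>x\<in>U \<times> V. \<Sum>y\<in>U \<times> V. \<alpha> (fst x) (fst y) * \<beta> (snd x) (snd y))
     = (\<Sum>u\<in>U. wdeg U \<alpha> u) * (\<Sum>v\<in>V. wdeg V \<beta> v)"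
proof -
  have "(\<Sum>x\<in>U \<times> V. \<Sum>y\<in>U \<times> V. \<alpha> (fst x) (fst y) * \<beta> (snd x) (snd y))
      = (\<Sum>u\<in>U. \<Sum>v\<in>V. \<Sum>u'\<in>U. \<Sum>v'\<in>V. \<alpha> u u' * \<beta> v v')"
    unfolding sum.cartesian_product' by simp
  also have "\<dots> = (\<Sum>u\<in>U. wdeg U \<alpha> u) * (\<Sum>v\<in>V. wdeg V \<beta> v)"
    by (simp only: wdeg_def sum_product)
  finally show ?thesis .
qed

lemma weight_joining_proportional_eq_tensor:
  assumes J: "weight_joining U \<alpha> V \<beta> \<gamma>"
    and scaled: "\<And>x y. x \<in> U \<times> V \<Longrightarrow> y \<in> U \<times> V \<Longrightarrow>
                 \<gamma> x y = K * (\<alpha> (fst x) (fst y) * \<beta> (snd x) (snd y))"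
    and xy: "x \<in> U \<times> V" "y \<in> U \<times> V"
  shows "\<gamma> x y = \<alpha> (fst x) (fst y) * \<beta> (snd x) (snd y)"
proof -
  have "1 = (\<Sum>x\<in>U \<times> V. \<Sum>y\<in>U \<times> V. \<gamma> x y)"
    using weight_joining_total[OF J] by simp
  also have "\<dots> = K * (\<Sum>x\<in>U \<times> V. \<Sum>y\<in>U \<times> V. \<alpha> (fst x) (fst y) * \<beta> (snd x) (snd y))"
    unfolding sum_distrib_left using scaled by (intro sum.cong) auto
  also have "\<dots> = K"
    unfolding sum_tensor weight_joining_sum_wdeg_fst[OF J] weight_joining_sum_wdeg_snd[OF J]
    by simp
  finally have "K = 1" by simp
  then show ?thesis
    using scaled[OF xy] by simp
qed

section \<open>Functions on \<int> with two periods\<close>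

lemma periodic_int_mult:
  fixes g :: "int \<Rightarrow> 'a"
  assumes period: "\<And>x. g (x + p) = g x"
  shows "g (x + k * p) = g x"
proof (induction k rule: int_induct[where k = 0])
  case base
  show ?case by simp
next
  case (step1 i)
  have "g (x + (i + 1) * p) = g (x + i * p + p)"
    by (simp add: algebra_simps)
  with step1 period show ?case by simp
next
  case (step2 i)
  have "g (x + (i - 1) * p) = g (x + (i - 1) * p + p)"
    by (rule period[symmetric])
  also have "\<dots> = g (x + i * p)"
    by (simp add: algebra_simps)
  finally show ?case
    using step2 by simp
qed

lemma periodic_int_coprime_const:
  fixes g :: "int \<Rightarrow> 'a"
  assumes period_a: "\<And>x. g (x + a) = g x" and period_b: "\<And>x. g (x + b) = g x"
    and "coprime a b"
  shows "g x = g y"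
proof -
  obtain s t where st: "s * a + t * b = 1"
    using bezout_int[of a b] \<open>coprime a b\<close> by (auto simp: coprime_iff_gcd_eq_1)
  have period_1: "g (z + 1) = g z" for z
  proof -
    have "g (z + s * a + t * b) = g (z + s * a)"
      using periodic_int_mult[of g b] period_b by blast
    also have "\<dots> = g z"
      using periodic_int_mult[of g a] period_a by blast
    finally show ?thesis
      using st by (simp add: add.assoc)
  qed
  show ?thesis
    using periodic_int_mult[of g 1 y "x - y"] period_1 by simp
qed

section \<open>The cycle \<open>C\<^sub>m\<close> and the path \<open>P\<^sub>n\<close>\<close>

text \<open>Positions on the cycle are integers, mapped to the vertices \<open>0..<m\<close> by the covering
  \<open>\<int> \<rightarrow> C\<^sub>m\<close>; this makes the periodicity arguments below arithmetic on \<open>\<int>\<close>.\<close>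

definition cyc :: "nat \<Rightarrow> int \<Rightarrow> nat" where
  "cyc m x = nat (x mod int m)"

lemma cyc_less: "0 < m \<Longrightarrow> cyc m x < m"
  unfolding cyc_def by (simp add: nat_less_iff)

lemma of_nat_cyc: "0 < m \<Longrightarrow> int (cyc m x) = x mod int m"
  unfolding cyc_def by simp

lemma cyc_of_nat: "u < m \<Longrightarrow> cyc m (int u) = u"
  unfolding cyc_def by simp

lemma cyc_eq_iff: "0 < m \<Longrightarrow> cyc m x = cyc m y \<longleftrightarrow> int m dvd x - y"
  unfolding cyc_def by (metis mod_eq_dvd_iff nat_eq_iff2 of_nat_0_less_iff pos_mod_sign)

lemma cyc_add_cyc: "0 < m \<Longrightarrow> cyc m (int (cyc m x) + y) = cyc m (x + y)"
  unfolding cyc_def by (simp add: mod_add_left_eq)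

lemma cyc_succ_neq_pred:
  assumes "3 \<le> m"
  shows "cyc m (x + 1) \<noteq> cyc m (x - 1)"
proof
  assume "cyc m (x + 1) = cyc m (x - 1)"
  then have "int m dvd 2"
    using assms cyc_eq_iff[of m "x + 1" "x - 1"] by simp
  then show False
    using assms zdvd_imp_le[of "int m" 2] by simp
qed

lemma cycle_w_neq_0_iff:
  assumes "u < m" "u' < m"
  shows "cycle_w m u u' \<noteq> 0 \<longleftrightarrow> u' = cyc m (int u + 1) \<or> u' = cyc m (int u - 1)"
proof -
  have m: "0 < m"
    using assms by simp
  have "(u + 1) mod m = cyc m (int u + 1)"
    unfolding cyc_def by (simp add: nat_mod_as_int add.commute)
  moreover have "u = (u' + 1) mod m \<longleftrightarrow> u' = cyc m (int u - 1)"
  proof -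
    have "(u' + 1) mod m = cyc m (int u' + 1)"
      unfolding cyc_def by (simp add: nat_mod_as_int add.commute)
    moreover have "u = cyc m (int u' + 1) \<longleftrightarrow> u' = cyc m (int u - 1)"
      using cyc_eq_iff[OF m, of "int u" "int u' + 1"] cyc_eq_iff[OF m, of "int u'" "int u - 1"]
        cyc_of_nat[OF assms(1)] cyc_of_nat[OF assms(2)]
      by (metis add.commute diff_diff_eq2 diff_add_eq_diff_diff_swap dvd_diff_commute)
    ultimately show ?thesis
      by simp
  qed
  ultimately show ?thesis
    using m unfolding cycle_w_def by auto
qed

lemma cycle_w_eq:
  assumes "u < m" "u' < m"
  shows "cycle_w m u u'
           = (if u' = cyc m (int u + 1) \<or> u' = cyc m (int u - 1) then 1 / (2 * real m) else 0)"
  using cycle_w_neq_0_iff[OF assms] by (auto simp: cycle_w_def split: if_splits)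

lemma cycle_w_sym: "cycle_w m u u' = cycle_w m u' u"
  unfolding cycle_w_def by auto

lemma sum_cycle_neighbours:
  assumes "3 \<le> m"
    and support: "\<And>u'. u' < m \<Longrightarrow> F u' \<noteq> 0 \<Longrightarrow> u' = cyc m (x + 1) \<or> u' = cyc m (x - 1)"
  shows "(\<Sum>u'\<in>{0..<m}. F u') = F (cyc m (x + 1)) + F (cyc m (x - 1))"
proof -
  have "(\<Sum>u'\<in>{0..<m}. F u') = (\<Sum>u'\<in>{cyc m (x + 1), cyc m (x - 1)}. F u')"
  proof (rule sum.mono_neutral_right)
    show "{cyc m (x + 1), cyc m (x - 1)} \<subseteq> {0..<m}"
      using \<open>3 \<le> m\<close> cyc_less[of m] by simp
    show "\<forall>u'\<in>{0..<m} - {cyc m (x + 1), cyc m (x - 1)}. F u' = 0"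
      using support by fastforce
  qed simp
  then show ?thesis
    using cyc_succ_neq_pred[OF \<open>3 \<le> m\<close>] by simp
qed

lemma sum_cycle_w_mult:
  assumes "3 \<le> m" "u < m"
  shows "(\<Sum>u'\<in>{0..<m}. cycle_w m u u' * F u')
           = (F (cyc m (int u + 1)) + F (cyc m (int u - 1))) / (2 * real m)"
proof -
  have "(\<Sum>u'\<in>{0..<m}. cycle_w m u u' * F u')
      = cycle_w m u (cyc m (int u + 1)) * F (cyc m (int u + 1))
        + cycle_w m u (cyc m (int u - 1)) * F (cyc m (int u - 1))"
    using assms cycle_w_neq_0_iff[of u m] by (intro sum_cycle_neighbours) auto
  then show ?thesis
    using assms cyc_less[of m] by (simp add: cycle_w_eq add_divide_distrib)
qed

lemma wdeg_cycle_w: "3 \<le> m \<Longrightarrow> u < m \<Longrightarrow> wdeg {0..<m} (cycle_w m) u = 1 / real m"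
  using sum_cycle_w_mult[of m u "\<lambda>_. 1"] by (simp add: wdeg_def)

definition path_valency :: "nat \<Rightarrow> nat \<Rightarrow> real" where
  "path_valency n v = of_bool (v + 1 < n) + of_bool (0 < v)"

lemma path_valency_pos: "2 \<le> n \<Longrightarrow> v < n \<Longrightarrow> 0 < path_valency n v"
  unfolding path_valency_def by auto

lemma path_w_neq_0_iff: "2 \<le> n \<Longrightarrow> path_w n v v' \<noteq> 0 \<longleftrightarrow> v' = v + 1 \<or> v = v' + 1"
  unfolding path_w_def by auto

lemma sum_path_neighbours:
  fixes G :: "nat \<Rightarrow> real"
  assumes "v < n" and support: "\<And>v'. v' < n \<Longrightarrow> G v' \<noteq> 0 \<Longrightarrow> v' = v + 1 \<or> v = v' + 1"
  shows "(\<Sum>v'\<in>{0..<n}. G v') = of_bool (v + 1 < n) * G (v + 1) + of_bool (0 < v) * G (v - 1)"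
proof -
  have "(\<Sum>v'\<in>{0..<n}. G v')
      = (\<Sum>v'\<in>{0..<n}. (if v' = v + 1 then G v' else 0)
                        + (if v' = v - 1 then of_bool (0 < v) * G v' else 0))"
    using support by (intro sum.cong) fastforce+
  moreover have "v - 1 < n"
    using \<open>v < n\<close> by simp
  ultimately show ?thesis
    using \<open>v < n\<close> by (simp add: sum.distrib)
qed

lemma sum_path_w_mult:
  assumes "v < n"
  shows "(\<Sum>v'\<in>{0..<n}. path_w n v v' * G v')
           = (of_bool (v + 1 < n) * G (v + 1) + of_bool (0 < v) * G (v - 1)) / (2 * (real n - 1))"
  using assms by (subst sum_path_neighbours) (auto simp: path_w_def add_divide_distrib split: if_splits)

lemma wdeg_path_w: "v < n \<Longrightarrow> wdeg {0..<n} (path_w n) v = path_valency n v / (2 * (real n - 1))"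
  using sum_path_w_mult[of v n "\<lambda>_. 1"] by (simp add: wdeg_def path_valency_def)

locale cycle_path =
  fixes m n :: nat
  assumes three_le_m: "3 \<le> m" and two_le_n: "2 \<le> n"
begin

lemma m_pos: "0 < m"
  using three_le_m by simp

lemma n_minus_1_pos: "0 < real n - 1"
  using two_le_n by simp

end

section \<open>Every joining is the product when \<open>m\<close> and \<open>2(n - 1)\<close> are coprime\<close>

locale cycle_path_joining = cycle_path +
  fixes \<gamma> :: "nat \<times> nat \<Rightarrow> nat \<times> nat \<Rightarrow> real"
  assumes joining: "weight_joining {0..<m} (cycle_w m) {0..<n} (path_w n) \<gamma>"
begin

abbreviation jdeg :: "nat \<Rightarrow> nat \<Rightarrow> real" where
  "jdeg u v \<equiv> wdeg ({0..<m} \<times> {0..<n}) \<gamma> (u, v)"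

lemma joining_support:
  assumes "u < m" "v < n" "u' < m" "v' < n" "\<gamma> (u, v) (u', v') \<noteq> 0"
  shows "cycle_w m u u' \<noteq> 0" and "path_w n v v' \<noteq> 0"
  using assms weight_joining_support_fst[OF joining, of u u' v v']
    weight_joining_support_snd[OF joining, of u u' v v']
    wdeg_cycle_w[OF three_le_m] wdeg_path_w path_valency_pos[OF two_le_n] m_pos n_minus_1_pos
  by auto

lemma sum_path_joining:
  assumes "u < m" "v < n" "u' < m"
  shows "(\<Sum>v'\<in>{0..<n}. \<gamma> (u, v) (u', v'))
           = of_bool (v + 1 < n) * \<gamma> (u, v) (u', v + 1) + of_bool (0 < v) * \<gamma> (u, v) (u', v - 1)"
  using assms joining_support(2) path_w_neq_0_iff[OF two_le_n] by (intro sum_path_neighbours) auto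

lemma sum_cycle_joining:
  assumes "u < m" "v < n" "v' < n"
  shows "(\<Sum>u'\<in>{0..<m}. \<gamma> (u, v) (u', v'))
           = \<gamma> (u, v) (cyc m (int u + 1), v') + \<gamma> (u, v) (cyc m (int u - 1), v')"
  using assms joining_support(1) cycle_w_neq_0_iff by (intro sum_cycle_neighbours three_le_m) blast

lemma cycle_balance:
  assumes "u < m" "v < n" "u' = cyc m (int u + 1) \<or> u' = cyc m (int u - 1)"
  shows "2 * (of_bool (v + 1 < n) * \<gamma> (u, v) (u', v + 1) + of_bool (0 < v) * \<gamma> (u, v) (u', v - 1))
           = jdeg u v"
proof -
  have "u' < m"
    using assms(3) cyc_less[OF m_pos] by blast
  then have "1 / real m * (\<Sum>v'\<in>{0..<n}. \<gamma> (u, v) (u', v')) = 1 / (2 * real m) * jdeg u v"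
    using weight_joining_transition_fst[OF joining, of u u' v] assms
    by (simp add: wdeg_cycle_w[OF three_le_m] cycle_w_eq)
  then have "2 * (\<Sum>v'\<in>{0..<n}. \<gamma> (u, v) (u', v')) = jdeg u v"
    using m_pos by (simp add: field_simps)
  then show ?thesis
    using sum_path_joining[OF assms(1,2) \<open>u' < m\<close>] by simp
qed

lemma path_balance:
  assumes "u < m" "v < n" "v' < n" "v' = v + 1 \<or> v = v' + 1"
  shows "path_valency n v * (\<gamma> (u, v) (cyc m (int u + 1), v') + \<gamma> (u, v) (cyc m (int u - 1), v'))
           = jdeg u v"
proof -
  have "path_valency n v / (2 * (real n - 1)) * (\<Sum>u'\<in>{0..<m}. \<gamma> (u, v) (u', v'))
      = 1 / (2 * (real n - 1)) * jdeg u v"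
    using weight_joining_transition_snd[OF joining, of v v' u] assms
    by (simp add: wdeg_path_w path_w_def)
  then have "path_valency n v * (\<Sum>u'\<in>{0..<m}. \<gamma> (u, v) (u', v')) = jdeg u v"
    using n_minus_1_pos by (simp add: field_simps)
  then show ?thesis
    using sum_cycle_joining[OF assms(1-3)] by simp
qed

definition rise :: "int \<Rightarrow> nat \<Rightarrow> real" where
  "rise x v = \<gamma> (cyc m x, v) (cyc m (x + 1), v + 1)"

definition fall :: "int \<Rightarrow> nat \<Rightarrow> real" where
  "fall x v = \<gamma> (cyc m x, v) (cyc m (x - 1), v + 1)"

lemma downward_edges:
  assumes "0 < v" "v < n"
  shows "\<gamma> (cyc m x, v) (cyc m (x + 1), v - 1) = fall (x + 1) (v - 1)"
    and "\<gamma> (cyc m x, v) (cyc m (x - 1), v - 1) = rise (x - 1) (v - 1)"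
  using assms cyc_less[OF m_pos] weight_joining_sym[OF joining]
  by (simp_all add: fall_def rise_def)

lemma marginals_at:
  assumes "v < n"
  shows "2 * (of_bool (v + 1 < n) * rise x v + of_bool (0 < v) * fall (x + 1) (v - 1))
           = jdeg (cyc m x) v"
    and "2 * (of_bool (v + 1 < n) * fall x v + of_bool (0 < v) * rise (x - 1) (v - 1))
           = jdeg (cyc m x) v"
    and "v + 1 < n \<Longrightarrow> path_valency n v * (rise x v + fall x v) = jdeg (cyc m x) v"
    and "0 < v \<Longrightarrow> path_valency n v * (fall (x + 1) (v - 1) + rise (x - 1) (v - 1))
           = jdeg (cyc m x) v"
proof -
  have u: "cyc m x < m"
    using cyc_less[OF m_pos] .
  have nbrs: "cyc m (int (cyc m x) + 1) = cyc m (x + 1)" "cyc m (int (cyc m x) - 1) = cyc m (x - 1)"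
    using cyc_add_cyc[OF m_pos, of x 1] cyc_add_cyc[OF m_pos, of x "-1"] by simp_all
  show "2 * (of_bool (v + 1 < n) * rise x v + of_bool (0 < v) * fall (x + 1) (v - 1))
          = jdeg (cyc m x) v"
    using cycle_balance[OF u assms, of "cyc m (x + 1)"] downward_edges[OF _ assms]
    by (cases "0 < v") (simp_all add: nbrs rise_def)
  show "2 * (of_bool (v + 1 < n) * fall x v + of_bool (0 < v) * rise (x - 1) (v - 1))
          = jdeg (cyc m x) v"
    using cycle_balance[OF u assms, of "cyc m (x - 1)"] downward_edges[OF _ assms]
    by (cases "0 < v") (simp_all add: nbrs fall_def)
  show "v + 1 < n \<Longrightarrow> path_valency n v * (rise x v + fall x v) = jdeg (cyc m x) v"
    using path_balance[OF u assms, of "v + 1"] by (simp add: nbrs rise_def fall_def)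
  show "0 < v \<Longrightarrow> path_valency n v * (fall (x + 1) (v - 1) + rise (x - 1) (v - 1))
          = jdeg (cyc m x) v"
    using path_balance[OF u assms, of "v - 1"] downward_edges[OF _ assms] assms by (simp add: nbrs)
qed

text \<open>Let \<open>a, b\<close> be the weights of the upward and downward edges from an inner vertex towards
  \<open>x + 1\<close>, and \<open>c, d\<close> those towards \<open>x - 1\<close>. The two cycle marginals and one path marginal give
  \<open>a + b = c + d = a + c\<close>, hence \<open>a = d\<close> and \<open>b = c\<close>: weights are constant along rising and falling
  diagonals. At the bottom and top levels only two edges remain, and the marginals identify a
  rising with a falling diagonal.\<close>

lemma rise_interior:
  assumes "0 < v" "v + 1 < n"
  shows "rise x v = rise (x - 1) (v - 1)"
proof -
  have "path_valency n v = 2"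
    using assms by (simp add: path_valency_def)
  then show ?thesis
    using marginals_at(1,2)[of v x] marginals_at(3)[of v x] assms by simp
qed

lemma fall_interior:
  assumes "0 < v" "v + 1 < n"
  shows "fall x v = fall (x + 1) (v - 1)"
proof -
  have "path_valency n v = 2"
    using assms by (simp add: path_valency_def)
  then show ?thesis
    using marginals_at(1,2)[of v x] marginals_at(3)[of v x] assms by simp
qed

lemma rise_eq_fall_bottom: "rise x 0 = fall x 0"
proof -
  have "path_valency n 0 = 1"
    using two_le_n by (simp add: path_valency_def)
  then show ?thesis
    using marginals_at(1)[of 0 x] marginals_at(3)[of 0 x] two_le_n by simp
qed

lemma fall_eq_rise_top: "fall (x + 1) (n - 2) = rise (x - 1) (n - 2)"
proof -
  have v: "0 < n - 1" "n - 1 < n" "n - 1 - 1 = n - 2"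
    using two_le_n by simp_all
  have "path_valency n (n - 1) = 1"
    using two_le_n by (simp add: path_valency_def)
  then show ?thesis
    using marginals_at(1)[OF v(2), of x] marginals_at(4)[OF v(2,1), of x] two_le_n
    by (simp add: v(3) numeral_2_eq_2)
qed

lemma rise_diagonal: "k + 1 < n \<Longrightarrow> rise x k = rise (x - int k) 0"
proof (induction k arbitrary: x)
  case 0
  show ?case by simp
next
  case (Suc k)
  then have "rise x (Suc k) = rise (x - 1) k"
    using rise_interior[of "Suc k" x] by simp
  also have "\<dots> = rise (x - int (Suc k)) 0"
    using Suc by (simp add: algebra_simps)
  finally show ?case .
qed

lemma fall_diagonal: "k + 1 < n \<Longrightarrow> fall x k = rise (x + int k) 0"
proof (induction k arbitrary: x)
  case 0
  show ?case
    by (simp add: rise_eq_fall_bottom)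
next
  case (Suc k)
  then have "fall x (Suc k) = fall (x + 1) k"
    using fall_interior[of "Suc k" x] by simp
  also have "\<dots> = rise (x + int (Suc k)) 0"
    using Suc by (simp add: algebra_simps)
  finally show ?case .
qed

lemma rise_period_m: "rise (x + int m) 0 = rise x 0"
proof -
  have "cyc m (x + int m) = cyc m x" "cyc m (x + int m + 1) = cyc m (x + 1)"
    using m_pos by (simp_all add: cyc_eq_iff)
  then show ?thesis
    by (simp add: rise_def)
qed

lemma rise_period_path: "rise (x + 2 * (int n - 1)) 0 = rise x 0"
proof -
  have k: "n - 2 + 1 < n" "int (n - 2) = int n - 2"
    using two_le_n by auto
  have "rise (x + 2 * (int n - 1)) 0 = fall (x + int n) (n - 2)"
    using fall_diagonal[OF k(1)] k(2) by (simp add: algebra_simps)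
  also have "\<dots> = rise (x + int n - 2) (n - 2)"
    using fall_eq_rise_top[of "x + int n - 1"] by (simp add: algebra_simps)
  also have "\<dots> = rise x 0"
    using rise_diagonal[OF k(1)] k(2) by simp
  finally show ?thesis .
qed

lemma rise_const:
  assumes "coprime m (2 * (n - 1))"
  shows "rise x 0 = rise 0 0"
proof (rule periodic_int_coprime_const[where g = "\<lambda>x. rise x 0"])
  show "rise (y + int m) 0 = rise y 0" for y
    by (rule rise_period_m)
  show "rise (y + 2 * (int n - 1)) 0 = rise y 0" for y
    by (rule rise_period_path)
  have "int (2 * (n - 1)) = 2 * (int n - 1)"
    using two_le_n by simp
  then show "coprime (int m) (2 * (int n - 1))"
    using assms by (metis coprime_int_iff)
qed

lemma upward_edge_value:
  assumes "coprime m (2 * (n - 1))" "u < m" "u' < m" "v + 1 < n" "cycle_w m u u' \<noteq> 0"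
  shows "\<gamma> (u, v) (u', v + 1) = rise 0 0"
proof -
  from assms(2,3,5) consider "u' = cyc m (int u + 1)" | "u' = cyc m (int u - 1)"
    using cycle_w_neq_0_iff by blast
  then show ?thesis
  proof cases
    case 1
    then have "\<gamma> (u, v) (u', v + 1) = rise (int u) v"
      using assms(2) by (simp add: rise_def cyc_of_nat)
    then show ?thesis
      using rise_diagonal[OF assms(4)] rise_const[OF assms(1)] by simp
  next
    case 2
    then have "\<gamma> (u, v) (u', v + 1) = fall (int u) v"
      using assms(2) by (simp add: fall_def cyc_of_nat)
    then show ?thesis
      using fall_diagonal[OF assms(4)] rise_const[OF assms(1)] by simp
  qed
qed

lemma edge_value:
  assumes "coprime m (2 * (n - 1))" "u < m" "u' < m" "v < n" "v' < n"
    and "cycle_w m u u' \<noteq> 0" "path_w n v v' \<noteq> 0"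
  shows "\<gamma> (u, v) (u', v') = rise 0 0"
proof -
  from assms(7) consider "v' = v + 1" | "v = v' + 1"
    using path_w_neq_0_iff[OF two_le_n] by blast
  then show ?thesis
  proof cases
    case 1
    then show ?thesis
      using upward_edge_value assms by simp
  next
    case 2
    then have "\<gamma> (u, v) (u', v') = \<gamma> (u', v') (u, v' + 1)"
      using weight_joining_sym[OF joining] assms(2-5) by simp
    also have "\<dots> = rise 0 0"
      using upward_edge_value assms 2 cycle_w_sym by simp
    finally show ?thesis .
  qed
qed

theorem joining_eq_tensor:
  assumes "coprime m (2 * (n - 1))" "x \<in> {0..<m} \<times> {0..<n}" "y \<in> {0..<m} \<times> {0..<n}"
  shows "\<gamma> x y = cycle_w m (fst x) (fst y) * path_w n (snd x) (snd y)"
proof (rule weight_joining_proportional_eq_tensor[OF joining _ assms(2,3)])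
  fix x y
  assume "x \<in> {0..<m} \<times> {0..<n}" "y \<in> {0..<m} \<times> {0..<n}"
  then obtain u v u' v' where xy: "x = (u, v)" "y = (u', v')" "u < m" "u' < m" "v < n" "v' < n"
    by auto
  show "\<gamma> x y = rise 0 0 * (4 * real m * (real n - 1))
                  * (cycle_w m (fst x) (fst y) * path_w n (snd x) (snd y))"
  proof (cases "cycle_w m u u' \<noteq> 0 \<and> path_w n v v' \<noteq> 0")
    case True
    then have "cycle_w m u u' = 1 / (2 * real m)" "path_w n v v' = 1 / (2 * (real n - 1))"
      by (simp_all add: cycle_w_def path_w_def split: if_splits)
    then show ?thesis
      using edge_value[OF assms(1) xy(3-6)] True xy m_pos n_minus_1_pos by simp
  next
    case False
    then have "\<gamma> (u, v) (u', v') = 0"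
      using joining_support[OF xy(3,5,4,6)] by blast
    then show ?thesis
      using False xy(1,2) by auto
  qed
qed

end

section \<open>A joining other than the product when \<open>m\<close> and \<open>2(n - 1)\<close> have a common factor\<close>

locale cycle_path_twist = cycle_path +
  fixes g :: "int \<Rightarrow> real"
  assumes g_period_m: "g (x + int m) = g x"
    and g_period_path: "g (x + 2 * (int n - 1)) = g x"
    and g_nonneg: "0 \<le> g x" and g_le_1: "g x \<le> 1"
begin

text \<open>Since \<open>F - 1\<close> is a discrete derivative of \<open>g\<close>, its sums telescope, and \<open>F\<close> averages
  to \<open>1\<close> over any window whose length is a period of \<open>g\<close>.\<close>

definition F :: "int \<Rightarrow> real" where
  "F x = 1 + (g (x + 1) - g x) / 2"

lemma F_nonneg: "0 \<le> F x"
  using g_le_1[of x] g_nonneg[of "x + 1"] by (simp add: F_def field_simps)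

lemma F_cyc: "F (int (cyc m x) + y) = F (x + y)"
proof -
  have "F (z + int m) = F z" for z
    using g_period_m[of z] g_period_m[of "z + 1"] by (simp add: F_def algebra_simps)
  then have "F (x mod int m + y + x div int m * int m) = F (x mod int m + y)"
    by (rule periodic_int_mult)
  then show ?thesis
    using m_pos by (simp add: of_nat_cyc algebra_simps)
qed

lemma F_top: "F (x + (int n - 1)) = F (x - (int n - 1))"
  using g_period_path[of "x - (int n - 1)"] g_period_path[of "x - (int n - 1) + 1"]
  by (simp add: F_def algebra_simps)

lemma sum_F_up: "(\<Sum>v<k. F (c + int v)) = real k + (g (c + int k) - g c) / 2"
proof -
  have "(\<Sum>v<k. F (c + int v)) = real k + (\<Sum>v<k. g (c + int (Suc v)) - g (c + int v)) / 2"
    by (simp add: F_def sum.distrib sum_divide_distrib[symmetric] algebra_simps)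
  then show ?thesis
    by (simp only: sum_lessThan_telescope[of "\<lambda>v. g (c + int v)"]) simp
qed

lemma sum_F_down: "(\<Sum>v<k. F (c - int v)) = real k + (g (c + 1) - g (c + 1 - int k)) / 2"
proof -
  have "(\<Sum>v<k. F (c - int v))
      = real k + (\<Sum>v<k. g (c + 1 - int v) - g (c + 1 - int (Suc v))) / 2"
    by (simp add: F_def sum.distrib sum_divide_distrib[symmetric] algebra_simps)
  then show ?thesis
    by (simp only: sum_lessThan_telescope'[of "\<lambda>v. g (c + 1 - int v)"]) simp
qed

definition upward_weight :: "nat \<Rightarrow> nat \<Rightarrow> nat \<Rightarrow> real" where
  "upward_weight u v u' = (if u' = cyc m (int u + 1) then F (int u - int v) else F (int u + int v))"

text \<open>An edge is reweighted according to its lower endpoint \<open>(u, v)\<close>: by \<open>F (u - v)\<close> on a rising and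
  by \<open>F (u + v)\<close> on a falling diagonal. The value \<open>1\<close> off the diagonal edges is irrelevant, as
  the product vanishes there.\<close>

definition Phi :: "nat \<times> nat \<Rightarrow> nat \<times> nat \<Rightarrow> real" where
  "Phi x y =
     (if snd y = snd x + 1 then upward_weight (fst x) (snd x) (fst y)
      else if snd x = snd y + 1 then upward_weight (fst y) (snd y) (fst x)
      else 1)"

lemma Phi_sym: "Phi x y = Phi y x"
  unfolding Phi_def by auto

lemma Phi_nonneg: "0 \<le> Phi x y"
  unfolding Phi_def upward_weight_def using F_nonneg by auto

lemma Phi_neighbours:
  assumes "u < m"
  shows "Phi (u, v) (cyc m (int u + 1), v + 1) = F (int u - int v)"
    and "Phi (u, v) (cyc m (int u - 1), v + 1) = F (int u + int v)"
    and "0 < v \<Longrightarrow> Phi (u, v) (cyc m (int u + 1), v - 1) = F (int u + int v)"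
    and "0 < v \<Longrightarrow> Phi (u, v) (cyc m (int u - 1), v - 1) = F (int u - int v)"
proof -
  have succ_pred: "cyc m (int u + 1) \<noteq> cyc m (int u - 1)"
    using cyc_succ_neq_pred[OF three_le_m] .
  have succ_succ: "cyc m (int (cyc m (int u + 1)) + 1) \<noteq> u"
    using cyc_succ_neq_pred[OF three_le_m, of "int u + 1"] cyc_add_cyc[OF m_pos] cyc_of_nat[OF assms]
    by (simp add: algebra_simps)
  have pred_succ: "cyc m (int (cyc m (int u - 1)) + 1) = u"
    using cyc_add_cyc[OF m_pos] cyc_of_nat[OF assms] by simp
  show "Phi (u, v) (cyc m (int u + 1), v + 1) = F (int u - int v)"
    by (simp add: Phi_def upward_weight_def)
  show "Phi (u, v) (cyc m (int u - 1), v + 1) = F (int u + int v)"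
    using succ_pred by (simp add: Phi_def upward_weight_def)
  assume "0 < v"
  then obtain w where v: "v = Suc w"
    using gr0_conv_Suc by blast
  show "Phi (u, v) (cyc m (int u + 1), v - 1) = F (int u + int v)"
    using succ_succ F_cyc[of "int u + 1" "int w"] by (simp add: Phi_def upward_weight_def v algebra_simps)
  show "Phi (u, v) (cyc m (int u - 1), v - 1) = F (int u - int v)"
    using pred_succ F_cyc[of "int u - 1" "- int w"] by (simp add: Phi_def upward_weight_def v algebra_simps)
qed

definition F_pair :: "nat \<Rightarrow> nat \<Rightarrow> real" where
  "F_pair u v = F (int u - int v) + F (int u + int v)"

lemma sum_path_Phi:
  assumes "u < m" "v < n" "u' = cyc m (int u + 1) \<or> u' = cyc m (int u - 1)"
  shows "(\<Sum>v'\<in>{0..<n}. path_w n v v' * Phi (u, v) (u', v'))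
           = path_valency n v * F_pair u v / (4 * (real n - 1))"
proof -
  have "(\<Sum>v'\<in>{0..<n}. path_w n v v' * Phi (u, v) (u', v'))
      = (of_bool (v + 1 < n) * Phi (u, v) (u', v + 1) + of_bool (0 < v) * Phi (u, v) (u', v - 1))
        / (2 * (real n - 1))"
    using sum_path_w_mult[OF assms(2)] .
  also have "\<dots> = path_valency n v * F_pair u v / (4 * (real n - 1))"
  proof -
    consider "v = 0" | "0 < v" "v + 1 < n" | "0 < v" "v + 1 = n"
      using assms(2) two_le_n by linarith
    then show ?thesis
    proof cases
      case 1
      then show ?thesis
        using assms(3) Phi_neighbours[OF assms(1)] two_le_n n_minus_1_pos
        by (auto simp: path_valency_def F_pair_def field_simps)
    next
      case 2
      then show ?thesis
        using assms(3) Phi_neighbours[OF assms(1)] n_minus_1_pos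
        by (auto simp: path_valency_def F_pair_def field_simps)
    next
      case 3
      then have "int v = int n - 1"
        by simp
      then have "F (int u + int v) = F (int u - int v)"
        using F_top[of "int u"] by simp
      with 3 show ?thesis
        using assms(3) Phi_neighbours[OF assms(1)] n_minus_1_pos
        by (auto simp: path_valency_def F_pair_def field_simps)
    qed
  qed
  finally show ?thesis .
qed

lemma sum_cycle_Phi:
  assumes "u < m" "v' = v + 1 \<or> (0 < v \<and> v' = v - 1)"
  shows "(\<Sum>u'\<in>{0..<m}. cycle_w m u u' * Phi (u, v) (u', v')) = F_pair u v / (2 * real m)"
  using sum_cycle_w_mult[OF three_le_m assms(1)] assms Phi_neighbours[OF assms(1)]
  by (auto simp: F_pair_def add.commute)

lemma sum_F_pair_cycle: "(\<Sum>u\<in>{0..<m}. F_pair u v) = 2 * real m"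
proof -
  have "(\<Sum>u\<in>{0..<m}. F_pair u v) = (\<Sum>u<m. F (- int v + int u)) + (\<Sum>u<m. F (int v + int u))"
    by (simp add: F_pair_def atLeast0LessThan sum.distrib add.commute)
  also have "\<dots> = 2 * real m"
    unfolding sum_F_up using g_period_m[of "- int v"] g_period_m[of "int v"] by simp
  finally show ?thesis .
qed

lemma sum_F_pair_path: "(\<Sum>v\<in>{0..<n}. path_valency n v * F_pair u v) = 4 * (real n - 1)"
proof -
  obtain k where n: "n = Suc k"
    using two_le_n by (cases n) auto
  have "(\<Sum>v<Suc k. of_bool (v + 1 < Suc k) * F_pair u v)
      = (\<Sum>v<k. of_bool (v + 1 < Suc k) * F_pair u v)"
    by (simp only: sum.lessThan_Suc) simp
  also have "\<dots> = (\<Sum>v<k. F_pair u v)"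
    by (rule sum.cong) auto
  finally have lower: "(\<Sum>v<Suc k. of_bool (v + 1 < Suc k) * F_pair u v) = (\<Sum>v<k. F_pair u v)" .
  have upper: "(\<Sum>v<Suc k. of_bool (0 < v) * F_pair u v) = (\<Sum>v<k. F_pair u (Suc v))"
    by (simp only: sum.lessThan_Suc_shift) simp
  have "(\<Sum>v\<in>{0..<n}. path_valency n v * F_pair u v)
      = (\<Sum>v<k. F_pair u v) + (\<Sum>v<k. F_pair u (Suc v))"
    unfolding n atLeast0LessThan path_valency_def distrib_right sum.distrib lower upper ..
  also have "\<dots> = (\<Sum>v<k. F (int u - int v)) + (\<Sum>v<k. F (int u + int v))
                  + (\<Sum>v<k. F (int u - 1 - int v)) + (\<Sum>v<k. F (int u + 1 + int v))"
    by (simp add: F_pair_def sum.distrib algebra_simps)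
  also have "\<dots> = 4 * real k"
    unfolding sum_F_up sum_F_down
    using g_period_path[of "int u - int k"] g_period_path[of "int u + 1 - int k"] n
    by (simp add: field_simps)
  finally show ?thesis
    using n by simp
qed

definition twisted :: "nat \<times> nat \<Rightarrow> nat \<times> nat \<Rightarrow> real" where
  "twisted x y = cycle_w m (fst x) (fst y) * path_w n (snd x) (snd y) * Phi x y"

lemma sum_path_twisted:
  "(\<Sum>v'\<in>{0..<n}. twisted (u, v) (u', v'))
     = cycle_w m u u' * (\<Sum>v'\<in>{0..<n}. path_w n v v' * Phi (u, v) (u', v'))"
  by (simp add: twisted_def sum_distrib_left mult.assoc)

lemma sum_cycle_twisted:
  "(\<Sum>u'\<in>{0..<m}. twisted (u, v) (u', v'))
     = path_w n v v' * (\<Sum>u'\<in>{0..<m}. cycle_w m u u' * Phi (u, v) (u', v'))"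
  by (simp add: twisted_def sum_distrib_left mult_ac)

lemma wdeg_twisted:
  assumes "u < m" "v < n"
  shows "wdeg ({0..<m} \<times> {0..<n}) twisted (u, v)
           = path_valency n v * F_pair u v / (4 * (real n - 1) * real m)"
proof -
  have "wdeg ({0..<m} \<times> {0..<n}) twisted (u, v)
      = (\<Sum>u'\<in>{0..<m}. cycle_w m u u' * (\<Sum>v'\<in>{0..<n}. path_w n v v' * Phi (u, v) (u', v')))"
    by (simp add: wdeg_def sum.cartesian_product' sum_path_twisted)
  also have "\<dots> = path_valency n v * F_pair u v / (4 * (real n - 1) * real m)"
    using sum_cycle_w_mult[OF three_le_m assms(1)] sum_path_Phi[OF assms, of "cyc m (int u + 1)"]
      sum_path_Phi[OF assms, of "cyc m (int u - 1)"] m_pos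
    by simp
  finally show ?thesis .
qed

lemma twisted_transition_fst:
  assumes "u < m" "u' < m" "v < n"
  shows "wdeg {0..<m} (cycle_w m) u * (\<Sum>v'\<in>{0..<n}. twisted (u, v) (u', v'))
           = cycle_w m u u' * wdeg ({0..<m} \<times> {0..<n}) twisted (u, v)"
proof (cases "cycle_w m u u' = 0")
  case False
  then show ?thesis
    using cycle_w_neq_0_iff[OF assms(1,2)] sum_path_Phi[OF assms(1,3)] m_pos
    by (simp add: sum_path_twisted wdeg_twisted[OF assms(1,3)] wdeg_cycle_w[OF three_le_m assms(1)])
qed (simp add: sum_path_twisted)

lemma twisted_transition_snd:
  assumes "v < n" "v' < n" "u < m"
  shows "wdeg {0..<n} (path_w n) v * (\<Sum>u'\<in>{0..<m}. twisted (u, v) (u', v'))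
           = path_w n v v' * wdeg ({0..<m} \<times> {0..<n}) twisted (u, v)"
proof (cases "path_w n v v' = 0")
  case False
  then have "v' = v + 1 \<or> (0 < v \<and> v' = v - 1)"
    using path_w_neq_0_iff[OF two_le_n] by auto
  then have S: "(\<Sum>u'\<in>{0..<m}. cycle_w m u u' * Phi (u, v) (u', v')) = F_pair u v / (2 * real m)"
    by (rule sum_cycle_Phi[OF assms(3)])
  show ?thesis
    unfolding sum_cycle_twisted S wdeg_twisted[OF assms(3,1)] wdeg_path_w[OF assms(1)]
    using n_minus_1_pos m_pos by (simp add: field_simps)
qed (simp add: sum_cycle_twisted)

lemma twisted_marginal_fst:
  "u < m \<Longrightarrow> (\<Sum>v\<in>{0..<n}. wdeg ({0..<m} \<times> {0..<n}) twisted (u, v)) = 1 / real m"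
  using sum_F_pair_path[of u] n_minus_1_pos
  by (simp add: wdeg_twisted sum_divide_distrib[symmetric])

lemma twisted_marginal_snd:
  "v < n \<Longrightarrow> (\<Sum>u\<in>{0..<m}. wdeg ({0..<m} \<times> {0..<n}) twisted (u, v)) = wdeg {0..<n} (path_w n) v"
  using sum_F_pair_cycle[of v] m_pos n_minus_1_pos
  by (simp add: wdeg_twisted wdeg_path_w sum_divide_distrib[symmetric] sum_distrib_left[symmetric]
      field_simps)

lemma weight_joining_twisted: "weight_joining {0..<m} (cycle_w m) {0..<n} (path_w n) twisted"
proof -
  have "(\<Sum>x\<in>{0..<m} \<times> {0..<n}. \<Sum>y\<in>{0..<m} \<times> {0..<n}. twisted x y)
      = (\<Sum>u\<in>{0..<m}. \<Sum>v\<in>{0..<n}. wdeg ({0..<m} \<times> {0..<n}) twisted (u, v))"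
    by (simp add: wdeg_def sum.cartesian_product')
  also have "\<dots> = 1"
    using m_pos by (simp add: twisted_marginal_fst)
  finally have total: "(\<Sum>x\<in>{0..<m} \<times> {0..<n}. \<Sum>y\<in>{0..<m} \<times> {0..<n}. twisted x y) = 1" .
  have "0 \<le> twisted x y" for x y
    unfolding twisted_def using Phi_nonneg[of x y]
    using two_le_n by (intro mult_nonneg_nonneg) (auto simp: cycle_w_def path_w_def)
  moreover have "twisted x y = twisted y x" for x y
    unfolding twisted_def using Phi_sym[of x y] cycle_w_sym by (simp add: path_w_def conj_commute disj_commute)
  ultimately show ?thesis
    unfolding weight_joining_def weight_fun_def
    using total twisted_marginal_fst twisted_marginal_snd twisted_transition_fst twisted_transition_snd
      wdeg_cycle_w[OF three_le_m]
    by simp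
qed

lemma twisted_neq_tensor:
  assumes "g 1 \<noteq> g 0"
  shows "twisted (0, 0) (1, 1) \<noteq> cycle_w m 0 1 * path_w n 0 1"
proof -
  have "cyc m 1 = 1"
    using three_le_m cyc_of_nat[of 1 m] by simp
  then have "Phi (0, 0) (1, 1) = F 0"
    by (simp add: Phi_def upward_weight_def)
  moreover have "F 0 \<noteq> 1"
    using assms by (simp add: F_def)
  moreover have "cycle_w m 0 1 * path_w n 0 1 \<noteq> 0"
    using three_le_m two_le_n by (simp add: cycle_w_def path_w_def)
  ultimately show ?thesis
    by (simp add: twisted_def)
qed

lemma not_strongly_disjoint:
  assumes "g 1 \<noteq> g 0"
  shows "\<not> strongly_disjoint {0..<m} (cycle_w m) {0..<n} (path_w n)"
proof
  assume "strongly_disjoint {0..<m} (cycle_w m) {0..<n} (path_w n)"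
  moreover have "(0, 0) \<in> {0..<m} \<times> {0..<n}" "(1, 1) \<in> {0..<m} \<times> {0..<n}"
    using three_le_m two_le_n by auto
  ultimately have "twisted (0, 0) (1, 1) = cycle_w m 0 1 * path_w n 0 1"
    using weight_joining_twisted unfolding strongly_disjoint_def by fastforce
  with twisted_neq_tensor[OF assms] show False ..
qed

end

context cycle_path
begin

lemma strongly_disjoint_if_coprime:
  assumes "coprime m (2 * (n - 1))"
  shows "strongly_disjoint {0..<m} (cycle_w m) {0..<n} (path_w n)"
  unfolding strongly_disjoint_def
proof (intro allI impI ballI)
  fix \<gamma> x y
  assume "weight_joining {0..<m} (cycle_w m) {0..<n} (path_w n) \<gamma>"
    and "x \<in> {0..<m} \<times> {0..<n}" "y \<in> {0..<m} \<times> {0..<n}"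
  then interpret cycle_path_joining m n \<gamma>
    by unfold_locales
  show "\<gamma> x y = cycle_w m (fst x) (fst y) * path_w n (snd x) (snd y)"
    by (rule joining_eq_tensor) fact+
qed

lemma not_strongly_disjoint_if_common_factor:
  assumes "2 \<le> d" "d dvd m" "d dvd 2 * (n - 1)"
  shows "\<not> strongly_disjoint {0..<m} (cycle_w m) {0..<n} (path_w n)"
proof -
  have "int d dvd 2 * (int n - 1)"
    using assms(3) two_le_n by (simp add: of_nat_diff flip: int_dvd_int_iff)
  moreover have "int d dvd int m"
    using assms(2) by simp
  ultimately interpret cycle_path_twist m n "\<lambda>x. of_bool (int d dvd x)"
    by unfold_locales (simp_all add: dvd_add_left_iff)
  have "\<not> int d dvd 1"
    using assms(1) by simp
  then show ?thesis
    by (intro not_strongly_disjoint) simp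
qed

lemma strongly_disjoint_iff_coprime:
  "strongly_disjoint {0..<m} (cycle_w m) {0..<n} (path_w n) \<longleftrightarrow> coprime m (2 * (n - 1))"
proof
  assume sd: "strongly_disjoint {0..<m} (cycle_w m) {0..<n} (path_w n)"
  show "coprime m (2 * (n - 1))"
  proof (rule ccontr)
    assume "\<not> coprime m (2 * (n - 1))"
    then have "gcd m (2 * (n - 1)) \<noteq> 1"
      by (simp add: coprime_iff_gcd_eq_1)
    moreover have "0 < gcd m (2 * (n - 1))"
      using m_pos by simp
    ultimately have "2 \<le> gcd m (2 * (n - 1))"
      by arith
    then show False
      using not_strongly_disjoint_if_common_factor[of "gcd m (2 * (n - 1))"] sd by simp
  qed
qed (rule strongly_disjoint_if_coprime)

end

theorem proposition3p6:
  fixes m n :: nat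
  assumes "m \<ge> 3" and "n \<ge> 2"
  shows "strongly_disjoint {0..<m} (cycle_w m) {0..<n} (path_w n)
           \<longleftrightarrow> odd m \<and> gcd m (n - 1) = 1"
proof -
  interpret cycle_path m n
    using assms by unfold_locales
  have "coprime m (2 * (n - 1)) \<longleftrightarrow> odd m \<and> gcd m (n - 1) = 1"
    by (simp add: coprime_mult_right_iff) (metis coprime_iff_gcd_eq_1 One_nat_def)
  then show ?thesis
    using strongly_disjoint_iff_coprime by simp
qed

end
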